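(* Let $A\in\mathcal{C}^{\mathrm{clq}}$ be such that $\mathbf{A}:=\mathcal{G}(A)$ is $(n-1)$-pure. Let $\widehat{B}\in\mathcal{C}^{\mathrm{geo}}$ be such that $\mathbf{A}^{\mathrm{geo}}\le\widehat{B}$. Then there exists $B\in\mathcal{C}^{\mathrm{clq}}$ such that $A\le B$, $\mathcal{G}(B)$ is $(n-1)$-pure, and $(\mathcal{G}(B))^{\mathrm{geo}}=\widehat{B}$.
   Context: Fix a natural number $n$ and a symmetric irreflexive $n$-ary relation symbol $S$; substructures are induced. For an $\{S\}$-structure $A$, $K\subseteq A$ with $|K|\ge n$ is a clique if all $n$-element subsets of $K$ (as tuples of distinct elements) lie in $S^A$; maximal cliques are those not properly contained in another clique; $\mathcal{M}(A)$ is the set of maximal cliques. For finite $X$, $|X|_*=\max\{0,|X|-(n-1)\}$; for finite $A$, $\delta_s(A)=|A|-\sum_{K\in\mathcal{M}(A)}|K|_*$; for finite $B\subseteq A$, $\delta_s(A/B)=\delta_s(A)-\delta_s(B)$; $B\le A$ means $B$ is a substructure of $A$ and $\delta_s(X/B)\ge0$ for all finite $X$ with $B\subseteq X\subseteq A$. $\mathcal{C}^{\mathrm{clq}}_0$ is the class of finite $\{S\}$-structures in which distinct maximal cliques intersect in fewer than $n$ points; $\mathcal{C}^{\mathrm{clq}}$ is the class of $A\in\mathcal{C}^{\mathrm{clq}}_0$ with $\{a\}\le A$ for all $a\in A$. For an $\{S\}$-structure $A$ with $\{a\}\le A$ for all $a\in A$, the associated geometry $\mathcal{G}(A)$ is the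 geometry (finitary matroid with $\mathrm{cl}(\emptyset)=\emptyset$ and singletons closed) on the universe of $A$ with dimension function $d(X)=\inf\{\delta_s(Y):X\subseteq Y\subseteq A,\ Y\text{ finite}\}$ for finite $X$. A geometry is $m$-pure if $m$ is the maximal natural number such that every $m$-element subset is independent. For a geometry $\mathbf{A}$ on $A$, $\mathbf{A}^{\mathrm{geo}}$ is the $\{S\}$-structure on $A$ whose maximal cliques are exactly the sets $\mathrm{cl}_{\mathbf{A}}(C)$ with $C\in[A]^{n-1}$ and $\mathrm{cl}_{\mathbf{A}}(C)\ne C$. An $\{S\}$-structure $A$ is geometric if whenever $X\subseteq A$, $|X|\ge n$ and $\delta_s(X)<n$, there is a unique $K\in\mathcal{M}(A)$ with $X\subseteq K$; $\mathcal{C}^{\mathrm{geo}}$ is the class of finite geometric $\{S\}$-structures. *)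

theory Defs
  imports Main
begin

text \<open>An {S}-structure for a symmetric irreflexive n-ary relation symbol S is encoded
  as a pair (universe, S) where S is the set of n-element subsets whose (distinct-element)
  enumerations lie in the relation.\<close>

type_synonym 'a struc = "'a set \<times> 'a set set"

definition univ :: "'a struc \<Rightarrow> 'a set" where "univ A = fst A"
definition rel :: "'a struc \<Rightarrow> 'a set set" where "rel A = snd A"

definition wf_struc :: "nat \<Rightarrow> 'a struc \<Rightarrow> bool" where
  "wf_struc n A \<longleftrightarrow> (\<forall>K\<in>rel A. K \<subseteq> univ A \<and> finite K \<and> card K = n)"

definition restr :: "'a struc \<Rightarrow> 'a set \<Rightarrow> 'a struc" where
  "restr A X = (X, {K \<in> rel A. K \<subseteq> X})"

definition substruc :: "'a struc \<Rightarrow> 'a struc \<Rightarrow> bool" where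
  "substruc B A \<longleftrightarrow> univ B \<subseteq> univ A \<and> rel B = {K \<in> rel A. K \<subseteq> univ B}"

definition clique :: "nat \<Rightarrow> 'a struc \<Rightarrow> 'a set \<Rightarrow> bool" where
  "clique n A K \<longleftrightarrow> K \<subseteq> univ A
     \<and> (\<exists>F \<subseteq> K. finite F \<and> card F = n)
     \<and> (\<forall>F \<subseteq> K. finite F \<and> card F = n \<longrightarrow> F \<in> rel A)"

definition maxcliques :: "nat \<Rightarrow> 'a struc \<Rightarrow> 'a set set" where
  "maxcliques n A = {K. clique n A K \<and> (\<forall>K'. clique n A K' \<and> K \<subseteq> K' \<longrightarrow> K' = K)}"

text \<open>|X|_* = max 0 (|X| - (n-1)), via truncated subtraction on nat.\<close>
definition card_star :: "nat \<Rightarrow> 'a set \<Rightarrow> nat" where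
  "card_star n X = card X - (n - 1)"

definition delta :: "nat \<Rightarrow> 'a struc \<Rightarrow> int" where
  "delta n A = int (card (univ A)) - (\<Sum>K\<in>maxcliques n A. int (card_star n K))"

text \<open>B \<le> A (self-sufficient embedding), for finite B.\<close>
definition strong :: "nat \<Rightarrow> 'a struc \<Rightarrow> 'a struc \<Rightarrow> bool" where
  "strong n B A \<longleftrightarrow> substruc B A \<and> finite (univ B) \<and>
     (\<forall>X. finite X \<and> univ B \<subseteq> X \<and> X \<subseteq> univ A \<longrightarrow>
        delta n (restr A X) - delta n (restr A (univ B)) \<ge> 0)"

definition C_clq0 :: "nat \<Rightarrow> 'a struc \<Rightarrow> bool" where
  "C_clq0 n A \<longleftrightarrow> wf_struc n A \<and> finite (univ A) \<and>
     (\<forall>K1\<in>maxcliques n A. \<forall>K2\<in>maxcliques n A. K1 \<noteq> K2 \<longrightarrow> card (K1 \<inter> K2) < n)"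

definition C_clq :: "nat \<Rightarrow> 'a struc \<Rightarrow> bool" where
  "C_clq n A \<longleftrightarrow> C_clq0 n A \<and> (\<forall>a\<in>univ A. strong n (restr A {a}) A)"

text \<open>Dimension function of the associated geometry G(A), on finite X.\<close>
definition gdim :: "nat \<Rightarrow> 'a struc \<Rightarrow> 'a set \<Rightarrow> int" where
  "gdim n A X = Inf {delta n (restr A Y) | Y. finite Y \<and> X \<subseteq> Y \<and> Y \<subseteq> univ A}"

text \<open>Closure operator of G(A) on finite sets (matroid closure from the dimension function).\<close>
definition gcl :: "nat \<Rightarrow> 'a struc \<Rightarrow> 'a set \<Rightarrow> 'a set" where
  "gcl n A X = {a \<in> univ A. gdim n A (insert a X) = gdim n A X}"

definition gindep :: "nat \<Rightarrow> 'a struc \<Rightarrow> 'a set \<Rightarrow> bool" where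
  "gindep n A X \<longleftrightarrow> finite X \<and> gdim n A X = int (card X)"

definition pure :: "nat \<Rightarrow> 'a struc \<Rightarrow> nat \<Rightarrow> bool" where
  "pure n A m \<longleftrightarrow>
     (\<forall>X\<subseteq>univ A. finite X \<and> card X = m \<longrightarrow> gindep n A X) \<and>
     (\<exists>X\<subseteq>univ A. finite X \<and> card X = m + 1 \<and> \<not> gindep n A X)"

text \<open>The {S}-structure of a geometry (universe U, closure cl): its maximal cliques are the
  sets cl(C), C an (n-1)-subset with cl(C) \<noteq> C; S consists of the n-subsets of those sets.\<close>
definition geo_of :: "nat \<Rightarrow> 'a set \<Rightarrow> ('a set \<Rightarrow> 'a set) \<Rightarrow> 'a struc" where
  "geo_of n U cl = (U, {K. K \<subseteq> U \<and> finite K \<and> card K = n \<and>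
       (\<exists>C\<subseteq>U. finite C \<and> card C = n - 1 \<and> cl C \<noteq> C \<and> K \<subseteq> cl C)})"

definition Ggeo :: "nat \<Rightarrow> 'a struc \<Rightarrow> 'a struc" where
  "Ggeo n A = geo_of n (univ A) (gcl n A)"

definition geometric :: "nat \<Rightarrow> 'a struc \<Rightarrow> bool" where
  "geometric n A \<longleftrightarrow> (\<forall>X\<subseteq>univ A. finite X \<and> card X \<ge> n \<and> delta n (restr A X) < int n
      \<longrightarrow> (\<exists>!K. K \<in> maxcliques n A \<and> X \<subseteq> K))"

definition C_geo :: "nat \<Rightarrow> 'a struc \<Rightarrow> bool" where
  "C_geo n A \<longleftrightarrow> wf_struc n A \<and> finite (univ A) \<and> geometric n A"

end

theory Submission
  imports Defs
begin

(* Keep A on its universe and replace every maximal clique K of Bh not contained in A by the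
  trimmed clique (K - A) \<union> anchor K, where the anchor consists of n - 1 points of K \<inter> A
  (all of K \<inter> A if it is smaller).  Purity of G(A) gives \<delta>(Bh|X) \<le> \<delta>(A|X) for X \<subseteq> A,
  and trimming only removes clique contributions outside A, so \<delta>(Bh|Y) \<le> \<delta>(B|Y) and
  relative dimensions over A can only grow.  Since Bh is geometric, \<delta>(Bh|Y) \<ge> n - 1 whenever
  |Y| \<ge> n - 1.  Hence A \<le> B and G(B) is (n-1)-pure; moreover every maximal clique of Bh has
  dimension n - 1 in G(B), so it is the closure of any n - 1 of its points, which yields
  G(B)^geo = Bh. *)

section \<open>Sparse maximal cliques and the predimension\<close>

definition sparse_cliques :: "nat \<Rightarrow> 'a struc \<Rightarrow> bool" where
  "sparse_cliques n S \<longleftrightarrow> finite (univ S) \<and>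
     (\<forall>K1\<in>maxcliques n S. \<forall>K2\<in>maxcliques n S. K1 \<noteq> K2 \<longrightarrow> card (K1 \<inter> K2) < n)"

lemma sparse_cliques_finite: "sparse_cliques n S \<Longrightarrow> finite (univ S)"
  by (simp add: sparse_cliques_def)

lemma univ_restr [simp]: "univ (restr S Y) = Y"
  by (simp add: restr_def univ_def)

lemma rel_restr [simp]: "rel (restr S Y) = {K \<in> rel S. K \<subseteq> Y}"
  by (simp add: restr_def rel_def)

lemma clique_restr_iff:
  assumes "Y \<subseteq> univ S"
  shows "clique n (restr S Y) Q \<longleftrightarrow> clique n S Q \<and> Q \<subseteq> Y"
  using assms unfolding clique_def by auto

lemma clique_substruc_iff:
  assumes "substruc B S"
  shows "clique n B Q \<longleftrightarrow> clique n S Q \<and> Q \<subseteq> univ B"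
  using assms unfolding clique_def substruc_def by auto

lemma maxcliques_clique: "K \<in> maxcliques n S \<Longrightarrow> clique n S K"
  by (simp add: maxcliques_def)

lemma clique_subset_in_rel:
  "clique n S K \<Longrightarrow> F \<subseteq> K \<Longrightarrow> finite F \<Longrightarrow> card F = n \<Longrightarrow> F \<in> rel S"
  by (simp add: clique_def)

lemma cliqueD:
  assumes "clique n S K" "finite (univ S)"
  shows "finite K" "n \<le> card K" "K \<subseteq> univ S"
proof -
  show fin: "finite K" "K \<subseteq> univ S"
    using assms unfolding clique_def using rev_finite_subset by blast+
  obtain F where "F \<subseteq> K" "card F = n" using assms(1) unfolding clique_def by blast
  then show "n \<le> card K" using fin card_mono by blast
qed

lemma clique_of_subset:
  assumes "clique n S K" "Q \<subseteq> K" "F \<subseteq> Q" "finite F" "card F = n"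
  shows "clique n S Q"
proof -
  have "Q \<subseteq> univ S" "\<forall>G\<subseteq>Q. finite G \<and> card G = n \<longrightarrow> G \<in> rel S"
    using assms(1,2) unfolding clique_def by auto
  then show ?thesis unfolding clique_def using assms(3-5) by blast
qed

lemma rel_clique:
  assumes "wf_struc n S" "X \<in> rel S"
  shows "clique n S X"
proof -
  have X: "X \<subseteq> univ S" "finite X" "card X = n" using assms unfolding wf_struc_def by auto
  have "F \<in> rel S" if "F \<subseteq> X" "card F = n" for F
    using that X assms(2) card_subset_eq[OF X(2)] by metis
  then show ?thesis unfolding clique_def using X by blast
qed

lemma clique_subset_maxclique:
  assumes "finite (univ S)" "clique n S Q"
  obtains K where "K \<in> maxcliques n S" "Q \<subseteq> K"
proof -
  let ?F = "{K. clique n S K \<and> Q \<subseteq> K}"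
  have "?F \<subseteq> Pow (univ S)" by (auto simp: clique_def)
  then have fin: "finite ?F" using assms(1) by (meson finite_Pow_iff finite_subset)
  have "Q \<in> ?F" using assms(2) by simp
  then obtain K where K: "K \<in> ?F" and mx: "\<forall>b\<in>?F. K \<le> b \<longrightarrow> K = b"
    using finite_has_maximal[OF fin] by blast
  have "K \<in> maxcliques n S" unfolding maxcliques_def using K mx by auto
  then show ?thesis using K that by auto
qed

lemma finite_maxcliques: "finite (univ S) \<Longrightarrow> finite (maxcliques n S)"
proof -
  assume "finite (univ S)"
  moreover have "maxcliques n S \<subseteq> Pow (univ S)" by (auto simp: maxcliques_def clique_def)
  ultimately show ?thesis by (meson finite_Pow_iff rev_finite_subset)
qed

lemma maxcliques_eqI:
  assumes fin: "finite (univ S)"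
    and clq: "\<And>F. F \<in> FF \<Longrightarrow> clique n S F"
    and cover: "\<And>Q. clique n S Q \<Longrightarrow> \<exists>F\<in>FF. Q \<subseteq> F"
    and sparse: "\<And>F F'. F \<in> FF \<Longrightarrow> F' \<in> FF \<Longrightarrow> F \<noteq> F' \<Longrightarrow> card (F \<inter> F') < n"
  shows "maxcliques n S = FF"
proof (intro set_eqI iffI)
  fix K assume K: "K \<in> maxcliques n S"
  then obtain F where F: "F \<in> FF" "K \<subseteq> F" using cover maxcliques_clique by blast
  then have "F = K" using K clq unfolding maxcliques_def by blast
  then show "K \<in> FF" using F by simp
next
  fix F assume F: "F \<in> FF"
  have "K' = F" if K': "clique n S K'" "F \<subseteq> K'" for K'
  proof -
    obtain F' where F': "F' \<in> FF" "K' \<subseteq> F'" using cover[OF K'(1)] by blast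
    have "F \<inter> F' = F" using K'(2) F'(2) by blast
    then have "F = F'" using sparse F F'(1) cliqueD(2)[OF clq[OF F] fin] by fastforce
    then show ?thesis using K'(2) F'(2) by blast
  qed
  then show "F \<in> maxcliques n S" unfolding maxcliques_def using clq[OF F] by blast
qed

lemma sparse_maxcliques_eq:
  assumes "sparse_cliques n S" "K \<in> maxcliques n S" "K' \<in> maxcliques n S"
    "Z \<subseteq> K" "Z \<subseteq> K'" "n \<le> card Z"
  shows "K = K'"
proof (rule ccontr)
  assume "K \<noteq> K'"
  then have "card (K \<inter> K') < n" using assms(1-3) unfolding sparse_cliques_def by blast
  moreover have "card Z \<le> card (K \<inter> K')"
    using assms(4,5) cliqueD(1)[OF maxcliques_clique[OF assms(2)] sparse_cliques_finite[OF assms(1)]]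
    by (intro card_mono) auto
  ultimately show False using assms(6) by linarith
qed

lemma maxcliques_restr:
  assumes "sparse_cliques n S" "Y \<subseteq> univ S"
  shows "maxcliques n (restr S Y) = (\<lambda>K. K \<inter> Y) ` {K \<in> maxcliques n S. n \<le> card (K \<inter> Y)}"
proof (intro set_eqI iffI)
  have fin: "finite (univ S)" using assms(1) by (rule sparse_cliques_finite)
  fix Q assume Q: "Q \<in> maxcliques n (restr S Y)"
  have cq: "clique n S Q" "Q \<subseteq> Y"
    using maxcliques_clique[OF Q] clique_restr_iff[OF assms(2)] by blast+
  obtain K where K: "K \<in> maxcliques n S" "Q \<subseteq> K" using clique_subset_maxclique[OF fin cq(1)] by blast
  obtain F where F: "F \<subseteq> Q" "finite F" "card F = n" using cq(1) unfolding clique_def by blast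
  have "F \<subseteq> K \<inter> Y" using F(1) K(2) cq(2) by blast
  then have cKY: "clique n S (K \<inter> Y)"
    using clique_of_subset[OF maxcliques_clique[OF K(1)] _ _ F(2,3)] by blast
  then have "clique n (restr S Y) (K \<inter> Y)" using clique_restr_iff[OF assms(2)] by blast
  moreover have "Q \<subseteq> K \<inter> Y" using K(2) cq(2) by blast
  ultimately have "K \<inter> Y = Q" using Q unfolding maxcliques_def by blast
  moreover have "n \<le> card (K \<inter> Y)" using cliqueD(2)[OF cKY fin] .
  ultimately show "Q \<in> (\<lambda>K. K \<inter> Y) ` {K \<in> maxcliques n S. n \<le> card (K \<inter> Y)}" using K(1) by blast
next
  have fin: "finite (univ S)" using assms(1) by (rule sparse_cliques_finite)
  fix Q assume "Q \<in> (\<lambda>K. K \<inter> Y) ` {K \<in> maxcliques n S. n \<le> card (K \<inter> Y)}"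
  then obtain K where K: "K \<in> maxcliques n S" "n \<le> card (K \<inter> Y)" "Q = K \<inter> Y" by blast
  obtain F where F: "F \<subseteq> K \<inter> Y" "card F = n" "finite F"
    using obtain_subset_with_card_n[OF K(2)] by blast
  then have "clique n S Q" using clique_of_subset[OF maxcliques_clique[OF K(1)] _ _ F(3,2)] K(3) by blast
  then have "clique n (restr S Y) Q" using K(3) clique_restr_iff[OF assms(2)] by blast
  moreover have "Q' = Q" if "clique n (restr S Y) Q'" "Q \<subseteq> Q'" for Q'
  proof -
    have c': "clique n S Q'" "Q' \<subseteq> Y" using that(1) clique_restr_iff[OF assms(2)] by blast+
    obtain K' where K': "K' \<in> maxcliques n S" "Q' \<subseteq> K'"
      using clique_subset_maxclique[OF fin c'(1)] by blast
    have "K = K'"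
      by (rule sparse_maxcliques_eq[OF assms(1) K(1) K'(1), of "K \<inter> Y"]) (use K(2,3) that(2) K'(2) in auto)
    then show ?thesis using K' c' K(3) that(2) by blast
  qed
  ultimately show "Q \<in> maxcliques n (restr S Y)" unfolding maxcliques_def by blast
qed

lemma card_star_eq_0: "card X < n \<Longrightarrow> card_star n X = 0"
  by (simp add: card_star_def)

lemma delta_restr_eq:
  assumes "sparse_cliques n S" "Y \<subseteq> univ S"
  shows "delta n (restr S Y) = int (card Y) - (\<Sum>K\<in>maxcliques n S. int (card_star n (K \<inter> Y)))"
proof -
  have fin: "finite (univ S)" using assms(1) by (rule sparse_cliques_finite)
  let ?M = "{K \<in> maxcliques n S. n \<le> card (K \<inter> Y)}"
  have "inj_on (\<lambda>K. K \<inter> Y) ?M"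
  proof (rule inj_onI)
    fix K K' assume "K \<in> ?M" "K' \<in> ?M" "K \<inter> Y = K' \<inter> Y"
    then show "K = K'" using sparse_maxcliques_eq[OF assms(1), of K K' "K \<inter> Y"] by auto
  qed
  then have "(\<Sum>K\<in>maxcliques n (restr S Y). int (card_star n K)) = (\<Sum>K\<in>?M. int (card_star n (K \<inter> Y)))"
    unfolding maxcliques_restr[OF assms] by (simp add: sum.reindex)
  also have "\<dots> = (\<Sum>K\<in>maxcliques n S. int (card_star n (K \<inter> Y)))"
    by (rule sum.mono_neutral_left) (auto simp: finite_maxcliques[OF fin] card_star_def)
  finally show ?thesis unfolding delta_def by simp
qed

lemma delta_restr_le_card:
  assumes "sparse_cliques n S" "Y \<subseteq> univ S"
  shows "delta n (restr S Y) \<le> int (card Y)"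
  unfolding delta_restr_eq[OF assms] by (simp add: sum_nonneg)

lemma delta_restr_small:
  assumes "sparse_cliques n S" "Y \<subseteq> univ S" "card Y < n"
  shows "delta n (restr S Y) = int (card Y)"
proof -
  have "finite Y" using assms(1,2) sparse_cliques_finite finite_subset by blast
  then have "card (K \<inter> Y) < n" for K using assms(3) card_mono[of Y "K \<inter> Y"] by auto
  then show ?thesis unfolding delta_restr_eq[OF assms(1,2)] by (simp add: card_star_eq_0)
qed

lemma delta_restr_in_maxclique:
  assumes "sparse_cliques n S" "K \<in> maxcliques n S" "Y \<subseteq> K" "n - 1 \<le> card Y" "n \<ge> 1"
  shows "delta n (restr S Y) = int n - 1"
proof -
  have fin: "finite (univ S)" using assms(1) by (rule sparse_cliques_finite)
  have fK: "finite K" and KU: "K \<subseteq> univ S" using cliqueD[OF maxcliques_clique[OF assms(2)] fin] by auto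
  have "card (K' \<inter> Y) < n" if "K' \<in> maxcliques n S - {K}" for K'
  proof -
    have "card (K' \<inter> K) < n" using assms(1,2) that unfolding sparse_cliques_def by auto
    moreover have "card (K' \<inter> Y) \<le> card (K' \<inter> K)" using fK assms(3) by (intro card_mono) auto
    ultimately show ?thesis by linarith
  qed
  then have "(\<Sum>K'\<in>maxcliques n S - {K}. int (card_star n (K' \<inter> Y))) = 0"
    by (simp add: card_star_eq_0)
  then have "(\<Sum>K'\<in>maxcliques n S. int (card_star n (K' \<inter> Y))) = int (card_star n (K \<inter> Y))"
    using sum.remove[OF finite_maxcliques[OF fin] assms(2), of "\<lambda>K'. int (card_star n (K' \<inter> Y))"]
    by simp
  also have "\<dots> = int (card Y) - (int n - 1)"
    using assms(3-5) by (simp add: Int_absorb1 card_star_def of_nat_diff)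
  finally show ?thesis
    unfolding delta_restr_eq[OF assms(1) subset_trans[OF assms(3) KU]] by linarith
qed

lemma card_star_Int_supermod:
  assumes "finite K"
  shows "int (card_star n (K \<inter> Y)) + int (card_star n (K \<inter> Y')) \<le>
         int (card_star n (K \<inter> (Y \<union> Y'))) + int (card_star n (K \<inter> (Y \<inter> Y')))"
proof -
  have "(K \<inter> Y) \<union> (K \<inter> Y') = K \<inter> (Y \<union> Y')" "(K \<inter> Y) \<inter> (K \<inter> Y') = K \<inter> (Y \<inter> Y')" by blast+
  then have "card (K \<inter> (Y \<union> Y')) + card (K \<inter> (Y \<inter> Y')) = card (K \<inter> Y) + card (K \<inter> Y')"
    using card_Un_Int[of "K \<inter> Y" "K \<inter> Y'"] assms by simp
  moreover have "card (K \<inter> (Y \<inter> Y')) \<le> card (K \<inter> Y)" "card (K \<inter> (Y \<inter> Y')) \<le> card (K \<inter> Y')"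
    using assms by (auto intro: card_mono)
  ultimately show ?thesis unfolding card_star_def by linarith
qed

lemma delta_restr_submod:
  assumes "sparse_cliques n S" "Y \<subseteq> univ S" "Y' \<subseteq> univ S"
  shows "delta n (restr S (Y \<union> Y')) + delta n (restr S (Y \<inter> Y'))
           \<le> delta n (restr S Y) + delta n (restr S Y')"
proof -
  have fin: "finite (univ S)" using assms(1) by (rule sparse_cliques_finite)
  have "finite Y" "finite Y'" using assms fin finite_subset by blast+
  then have c: "int (card (Y \<union> Y')) + int (card (Y \<inter> Y')) = int (card Y) + int (card Y')"
    using card_Un_Int by fastforce
  have s: "(\<Sum>K\<in>maxcliques n S. int (card_star n (K \<inter> Y))) + (\<Sum>K\<in>maxcliques n S. int (card_star n (K \<inter> Y')))
     \<le> (\<Sum>K\<in>maxcliques n S. int (card_star n (K \<inter> (Y \<union> Y'))))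
        + (\<Sum>K\<in>maxcliques n S. int (card_star n (K \<inter> (Y \<inter> Y'))))"
    unfolding sum.distrib[symmetric]
    by (rule sum_mono, rule card_star_Int_supermod) (use fin cliqueD(1) maxcliques_clique in blast)
  have u: "Y \<union> Y' \<subseteq> univ S" "Y \<inter> Y' \<subseteq> univ S" using assms by auto
  show ?thesis
    unfolding delta_restr_eq[OF assms(1,2)] delta_restr_eq[OF assms(1,3)]
      delta_restr_eq[OF assms(1) u(1)] delta_restr_eq[OF assms(1) u(2)]
    using c s by linarith
qed

lemma delta_restr_rel:
  assumes "X \<in> rel S" "finite X" "card X = n" "n \<ge> 1"
  shows "delta n (restr S X) = int n - 1"
proof -
  have "maxcliques n (restr S X) = {X}"
  proof (rule maxcliques_eqI)
    show "clique n (restr S X) F" if "F \<in> {X}" for F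
      using that assms card_subset_eq[OF assms(2)] unfolding clique_def by auto
    show "\<exists>F\<in>{X}. Q \<subseteq> F" if "clique n (restr S X) Q" for Q
      using that unfolding clique_def by simp
  qed (use assms in auto)
  then show ?thesis unfolding delta_def card_star_def using assms(3,4) by simp
qed

lemma geometricE:
  assumes "geometric n S" "X \<subseteq> univ S" "finite X" "n \<le> card X" "delta n (restr S X) < int n"
  obtains K where "K \<in> maxcliques n S" "X \<subseteq> K"
    "\<And>K'. K' \<in> maxcliques n S \<Longrightarrow> X \<subseteq> K' \<Longrightarrow> K' = K"
proof -
  have "\<exists>!K. K \<in> maxcliques n S \<and> X \<subseteq> K"
    by (rule assms(1)[unfolded geometric_def, rule_format, OF assms(2)]) (use assms in simp)
  then show ?thesis using that by (metis (no_types, lifting))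
qed

lemma geometric_sparse_cliques:
  assumes "geometric n S" "finite (univ S)" "n \<ge> 1"
  shows "sparse_cliques n S"
proof -
  have "card (K1 \<inter> K2) < n"
    if K: "K1 \<in> maxcliques n S" "K2 \<in> maxcliques n S" "K1 \<noteq> K2" for K1 K2
  proof (rule ccontr)
    assume "\<not> card (K1 \<inter> K2) < n"
    then have "n \<le> card (K1 \<inter> K2)" by simp
    then obtain X where X: "X \<subseteq> K1 \<inter> K2" "card X = n" "finite X"
      by (rule obtain_subset_with_card_n)
    have c1: "clique n S K1" using K(1) by (rule maxcliques_clique)
    have XU: "X \<subseteq> univ S" using X(1) c1 unfolding clique_def by blast
    have "X \<in> rel S" using clique_subset_in_rel[OF c1 _ X(3) X(2)] X(1) by blast
    then have "delta n (restr S X) < int n" using delta_restr_rel[OF _ X(3) X(2) assms(3)] by simp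
    then obtain K where uniq: "\<And>K'. K' \<in> maxcliques n S \<Longrightarrow> X \<subseteq> K' \<Longrightarrow> K' = K"
      using geometricE[OF assms(1) XU X(3)] X(2) by (metis order_refl)
    have "K1 = K" "K2 = K" using uniq K(1,2) X(1) by auto
    then show False using K(3) by simp
  qed
  then show ?thesis unfolding sparse_cliques_def using assms(2) by blast
qed

lemma geometric_maxcliques_Int_lt:
  assumes "geometric n S" "sparse_cliques n S" "n \<ge> 2"
    and K: "K \<in> maxcliques n S" "K' \<in> maxcliques n S" "K \<noteq> K'"
  shows "card (K \<inter> K') < n - 1"
proof (rule ccontr)
  have fin: "finite (univ S)" using assms(2) by (rule sparse_cliques_finite)
  assume "\<not> card (K \<inter> K') < n - 1"
  then have "n - 1 \<le> card (K \<inter> K')" by simp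
  then obtain C where C: "C \<subseteq> K \<inter> K'" "card C = n - 1" "finite C" by (rule obtain_subset_with_card_n)
  have "\<not> K \<subseteq> K'" if "K \<in> maxcliques n S" "K' \<in> maxcliques n S" "K \<noteq> K'" for K K'
    using that maxcliques_clique[OF that(2)] unfolding maxcliques_def by blast
  then obtain k k' where k: "k \<in> K" "k \<notin> K'" and k': "k' \<in> K'" "k' \<notin> K" using K by blast
  let ?X = "insert k (insert k' C)"
  have "k \<notin> C" "k' \<notin> C" using C k k' by auto
  then have ck: "card (insert k C) = n" "card (insert k' C) = n" using C(2,3) assms(3) by auto
  have "k \<notin> insert k' C" using k k' \<open>k \<notin> C\<close> by auto
  then have cX: "card ?X = n + 1" using ck(2) C(3) by simp
  have fX: "finite ?X" using C by simp
  have "K \<subseteq> univ S" "K' \<subseteq> univ S" using cliqueD(3)[OF maxcliques_clique fin] K(1,2) by blast+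
  then have XU: "?X \<subseteq> univ S" using C k k' by blast
  have in_K: "insert k C \<subseteq> K" "insert k' C \<subseteq> K'" using k k' C by auto
  have "insert k C \<subseteq> K \<inter> ?X" "insert k' C \<subseteq> K' \<inter> ?X" using in_K by auto
  then have "n \<le> card (K \<inter> ?X)" "n \<le> card (K' \<inter> ?X)" using card_mono fX ck by (metis finite_Int)+
  then have "1 \<le> card_star n (K \<inter> ?X)" "1 \<le> card_star n (K' \<inter> ?X)"
    using assms(3) unfolding card_star_def by linarith+
  then have "2 \<le> (\<Sum>K''\<in>{K, K'}. int (card_star n (K'' \<inter> ?X)))" using K(3) by simp
  also have "\<dots> \<le> (\<Sum>K''\<in>maxcliques n S. int (card_star n (K'' \<inter> ?X)))"
    by (rule sum_mono2[OF finite_maxcliques[OF fin]]) (use K in auto)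
  finally have "delta n (restr S ?X) < int n"
    unfolding delta_restr_eq[OF assms(2) XU] using cX by linarith
  moreover have "n \<le> card ?X" using cX by simp
  ultimately obtain K0 where K0: "K0 \<in> maxcliques n S" "?X \<subseteq> K0"
    using geometricE[OF assms(1) XU fX] by blast
  have "insert k C \<subseteq> K0" "insert k' C \<subseteq> K0" using K0(2) by auto
  then have "K = K0" "K' = K0"
    using sparse_maxcliques_eq[OF assms(2) K(1) K0(1) in_K(1)] sparse_maxcliques_eq[OF assms(2) K(2) K0(1) in_K(2)] ck
    by simp_all
  then show False using K(3) by simp
qed

lemma geometric_delta_restr_ge:
  assumes "geometric n S" "sparse_cliques n S" "n \<ge> 1" "Y \<subseteq> univ S" "n - 1 \<le> card Y"
  shows "int n - 1 \<le> delta n (restr S Y)"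
proof (cases "card Y < n")
  case True
  then show ?thesis using delta_restr_small[OF assms(2,4) True] assms(5) by linarith
next
  case False
  show ?thesis
  proof (rule ccontr)
    assume "\<not> int n - 1 \<le> delta n (restr S Y)"
    moreover have "finite Y" using assms(2,4) sparse_cliques_finite finite_subset by blast
    moreover have "n \<le> card Y" using False by simp
    moreover have "delta n (restr S Y) < int n" using calculation(1) by linarith
    ultimately obtain K where "K \<in> maxcliques n S" "Y \<subseteq> K"
      using geometricE[OF assms(1,4)] by blast
    then have "delta n (restr S Y) = int n - 1" using delta_restr_in_maxclique assms(2,3,5) by blast
    then show False using \<open>\<not> int n - 1 \<le> delta n (restr S Y)\<close> by simp
  qed
qed

section \<open>The associated geometry\<close>

lemma finite_delta_values:
  "finite (univ S) \<Longrightarrow> finite {delta n (restr S Y) | Y. finite Y \<and> X \<subseteq> Y \<and> Y \<subseteq> univ S}"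
  by (rule finite_subset[of _ "(\<lambda>Y. delta n (restr S Y)) ` Pow (univ S)"]) auto

lemma gdim_le_delta:
  assumes "finite (univ S)" "X \<subseteq> Y" "Y \<subseteq> univ S"
  shows "gdim n S X \<le> delta n (restr S Y)"
proof -
  have "delta n (restr S Y) \<in> {delta n (restr S Y) | Y. finite Y \<and> X \<subseteq> Y \<and> Y \<subseteq> univ S}"
    using assms finite_subset by blast
  then show ?thesis
    unfolding gdim_def by (rule cInf_lower) (rule bdd_below_finite[OF finite_delta_values[OF assms(1)]])
qed

lemma gdim_attained:
  assumes "finite (univ S)" "X \<subseteq> univ S"
  obtains Y where "X \<subseteq> Y" "Y \<subseteq> univ S" "gdim n S X = delta n (restr S Y)"
proof -
  let ?G = "{delta n (restr S Y) | Y. finite Y \<and> X \<subseteq> Y \<and> Y \<subseteq> univ S}"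
  have ne: "?G \<noteq> {}" using assms by blast
  have "Inf ?G \<in> ?G"
    using cInf_eq_Min[OF finite_delta_values[OF assms(1)] ne] Min_in[OF finite_delta_values[OF assms(1)] ne]
    by simp
  then show ?thesis using that unfolding gdim_def by auto
qed

lemma gdim_mono:
  assumes "finite (univ S)" "X \<subseteq> X'" "X' \<subseteq> univ S"
  shows "gdim n S X \<le> gdim n S X'"
proof -
  obtain Y where "X' \<subseteq> Y" "Y \<subseteq> univ S" "gdim n S X' = delta n (restr S Y)"
    using gdim_attained[OF assms(1,3)] by blast
  then show ?thesis using gdim_le_delta[OF assms(1)] assms(2) by (metis order_trans)
qed

lemma gdim_submod:
  assumes "sparse_cliques n S" "X \<subseteq> univ S" "X' \<subseteq> univ S"
  shows "gdim n S (X \<union> X') + gdim n S (X \<inter> X') \<le> gdim n S X + gdim n S X'"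
proof -
  have fin: "finite (univ S)" using assms(1) by (rule sparse_cliques_finite)
  obtain Y where Y: "X \<subseteq> Y" "Y \<subseteq> univ S" "gdim n S X = delta n (restr S Y)"
    using gdim_attained[OF fin assms(2)] by blast
  obtain Y' where Y': "X' \<subseteq> Y'" "Y' \<subseteq> univ S" "gdim n S X' = delta n (restr S Y')"
    using gdim_attained[OF fin assms(3)] by blast
  have "gdim n S (X \<union> X') \<le> delta n (restr S (Y \<union> Y'))"
    using Y Y' by (intro gdim_le_delta[OF fin]) auto
  moreover have "gdim n S (X \<inter> X') \<le> delta n (restr S (Y \<inter> Y'))"
    using Y Y' by (intro gdim_le_delta[OF fin]) auto
  ultimately show ?thesis using delta_restr_submod[OF assms(1) Y(2) Y'(2)] Y(3) Y'(3) by linarith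
qed

lemma gdim_Un_gcl:
  assumes "sparse_cliques n S" "C \<subseteq> univ S" "finite Z" "Z \<subseteq> gcl n S C"
  shows "gdim n S (C \<union> Z) = gdim n S C"
  using assms(3,4)
proof (induction Z rule: finite_induct)
  case empty
  then show ?case by simp
next
  case (insert z Z)
  have fin: "finite (univ S)" using assms(1) by (rule sparse_cliques_finite)
  have sub: "C \<union> Z \<subseteq> univ S" "insert z C \<subseteq> univ S" using insert(4) assms(2) by (auto simp: gcl_def)
  have "gdim n S (insert z C) = gdim n S C" using insert(4) unfolding gcl_def by blast
  moreover have "(C \<union> Z) \<union> insert z C = C \<union> insert z Z" by blast
  moreover have "gdim n S C \<le> gdim n S ((C \<union> Z) \<inter> insert z C)"
    using sub by (intro gdim_mono[OF fin]) auto
  moreover have "gdim n S C \<le> gdim n S (C \<union> insert z Z)"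
    using sub by (intro gdim_mono[OF fin]) auto
  ultimately show ?case using gdim_submod[OF assms(1) sub] insert by fastforce
qed

lemma gcl_if_gdim_le:
  assumes "finite (univ S)" "C \<subseteq> K" "K \<subseteq> univ S" "gdim n S K \<le> gdim n S C"
  shows "K \<subseteq> gcl n S C"
proof
  fix x assume x: "x \<in> K"
  have "gdim n S C \<le> gdim n S (insert x C)" using x assms by (intro gdim_mono) auto
  moreover have "gdim n S (insert x C) \<le> gdim n S K" using x assms by (intro gdim_mono) auto
  ultimately show "x \<in> gcl n S C" unfolding gcl_def using x assms(3,4) by auto
qed

lemma univ_Ggeo [simp]: "univ (Ggeo n A) = univ A"
  by (simp add: Ggeo_def geo_of_def univ_def)

lemma rel_Ggeo: "rel (Ggeo n A) = {K. K \<subseteq> univ A \<and> finite K \<and> card K = n \<and>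
       (\<exists>C\<subseteq>univ A. finite C \<and> card C = n - 1 \<and> gcl n A C \<noteq> C \<and> K \<subseteq> gcl n A C)}"
  by (simp add: Ggeo_def geo_of_def rel_def univ_def)

lemma pure_gdim:
  assumes "pure n A (n - 1)" "n \<ge> 1" "C \<subseteq> univ A" "finite C" "card C = n - 1"
  shows "gdim n A C = int n - 1"
  using assms unfolding pure_def gindep_def by auto

lemma pure_delta_restr_ge:
  assumes "pure n A (n - 1)" "n \<ge> 1" "finite (univ A)" "Z \<subseteq> univ A" "n - 1 \<le> card Z"
  shows "int n - 1 \<le> delta n (restr A Z)"
proof -
  obtain W where W: "W \<subseteq> Z" "card W = n - 1" "finite W"
    using obtain_subset_with_card_n[OF assms(5)] by blast
  then have "gdim n A W = int n - 1" using pure_gdim assms by blast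
  moreover have "gdim n A W \<le> delta n (restr A Z)" using gdim_le_delta[OF assms(3) W(1) assms(4)] .
  ultimately show ?thesis by simp
qed

lemma pure_sum_card_star_le:
  assumes "sparse_cliques n A" "pure n A (n - 1)" "n \<ge> 1" "Z \<subseteq> univ A"
  shows "(\<Sum>F\<in>maxcliques n A. int (card_star n (F \<inter> Z))) \<le> int (card_star n Z)"
proof (cases "n - 1 \<le> card Z")
  case True
  have "int n - 1 \<le> delta n (restr A Z)"
    using pure_delta_restr_ge[OF assms(2,3) sparse_cliques_finite[OF assms(1)] assms(4) True] .
  moreover have "int (card_star n Z) = int (card Z) - (int n - 1)"
    using True assms(3) unfolding card_star_def by linarith
  ultimately show ?thesis unfolding delta_restr_eq[OF assms(1,4)] by linarith
next
  case False
  have "finite Z" using assms(1,4) sparse_cliques_finite finite_subset by blast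
  then have "card (F \<inter> Z) < n" for F using False card_mono[of Z "F \<inter> Z"] by auto
  then show ?thesis by (simp add: card_star_eq_0)
qed

lemma maxclique_clique_Ggeo:
  assumes "sparse_cliques n A" "pure n A (n - 1)" "n \<ge> 1" "F \<in> maxcliques n A"
  shows "clique n (Ggeo n A) F"
proof -
  have fin: "finite (univ A)" using assms(1) by (rule sparse_cliques_finite)
  have cF: "clique n A F" using assms(4) by (rule maxcliques_clique)
  have fF: "finite F" "n \<le> card F" "F \<subseteq> univ A" using cliqueD[OF cF fin] by blast+
  have dF: "delta n (restr A F) = int n - 1"
    using delta_restr_in_maxclique[OF assms(1,4) subset_refl] fF(2) assms(3) by simp
  have "S \<in> rel (Ggeo n A)" if S: "S \<subseteq> F" "finite S" "card S = n" for S
  proof -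
    obtain s where s: "s \<in> S" using S(3) assms(3) by fastforce
    let ?C = "S - {s}"
    have C: "?C \<subseteq> univ A" "finite ?C" "card ?C = n - 1" using S s fF(3) by auto
    have "gdim n A F \<le> gdim n A ?C"
      using gdim_le_delta[OF fin subset_refl fF(3), of n] dF pure_gdim[OF assms(2,3) C] by simp
    then have Fcl: "F \<subseteq> gcl n A ?C" using gcl_if_gdim_le[OF fin _ fF(3)] S(1) by blast
    then have "gcl n A ?C \<noteq> ?C" using s S by blast
    then show ?thesis unfolding rel_Ggeo using S fF(3) C Fcl by blast
  qed
  then show ?thesis using cF fF(3) unfolding clique_def by auto
qed

lemma gdim_clique_Ggeo_le:
  assumes "sparse_cliques n A" "pure n A (n - 1)" "n \<ge> 1" "clique n (Ggeo n A) X"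
  shows "gdim n A X \<le> int n - 1"
proof -
  have fin: "finite (univ A)" using assms(1) by (rule sparse_cliques_finite)
  have X: "finite X" "n \<le> card X" "X \<subseteq> univ A" using cliqueD[OF assms(4)] fin by auto
  have "n - 1 \<le> card X" using X(2) by simp
  then obtain C0 where C0: "C0 \<subseteq> X" "card C0 = n - 1" "finite C0"
    by (rule obtain_subset_with_card_n)
  have C0A: "C0 \<subseteq> univ A" using C0 X(3) by blast
  have gC0: "gdim n A C0 = int n - 1" using pure_gdim[OF assms(2,3) C0A C0(3,2)] .
  have pair: "gdim n A (insert a C0) \<le> int n - 1" if a: "a \<in> X - C0" for a
  proof -
    have "card (insert a C0) = n" using a C0 assms(3) by simp
    then have "insert a C0 \<in> rel (Ggeo n A)"
      using clique_subset_in_rel[OF assms(4)] a C0 by simp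
    then obtain C' where C': "C' \<subseteq> univ A" "finite C'" "card C' = n - 1" "insert a C0 \<subseteq> gcl n A C'"
      unfolding rel_Ggeo by blast
    have "gdim n A (insert a C0) \<le> gdim n A (C' \<union> insert a C0)"
      using C'(1) C0A a X(3) by (intro gdim_mono[OF fin]) auto
    also have "\<dots> = gdim n A C'" using gdim_Un_gcl[OF assms(1) C'(1) _ C'(4)] C0(3) by simp
    also have "\<dots> = int n - 1" using pure_gdim[OF assms(2,3) C'(1-3)] .
    finally show ?thesis .
  qed
  have "gdim n A (C0 \<union> T) \<le> int n - 1" if "finite T" "T \<subseteq> X - C0" for T
    using that
  proof (induction T rule: finite_induct)
    case empty
    then show ?case using gC0 by simp
  next
    case (insert a T)
    have sub: "C0 \<union> T \<subseteq> univ A" "insert a C0 \<subseteq> univ A" using insert C0A X(3) by auto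
    have "(C0 \<union> T) \<union> insert a C0 = C0 \<union> insert a T" "(C0 \<union> T) \<inter> insert a C0 = C0" using insert by auto
    then show ?case using gdim_submod[OF assms(1) sub] insert pair gC0 by fastforce
  qed
  moreover have "X = C0 \<union> (X - C0)" using C0 by blast
  ultimately show ?thesis using X(1) by (metis finite_Diff order_refl)
qed

section \<open>Trimming the cliques of a geometric extension\<close>

locale geo_extension =
  fixes n :: nat and A Bh :: "'a struc"
  assumes n_ge_2: "n \<ge> 2"
    and C_clq_A: "C_clq n A"
    and pure_A: "pure n A (n - 1)"
    and C_geo_Bh: "C_geo n Bh"
    and strong_Ggeo_A: "strong n (Ggeo n A) Bh"
begin

abbreviation "UA \<equiv> univ A"
abbreviation "U \<equiv> univ Bh"
abbreviation "MA \<equiv> maxcliques n A"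
abbreviation "MB \<equiv> maxcliques n Bh"

lemma n_ge_1: "n \<ge> 1"
  using n_ge_2 by simp

lemma finite_UA: "finite UA"
  using C_clq_A unfolding C_clq_def C_clq0_def by blast

lemma finite_U: "finite U"
  using C_geo_Bh unfolding C_geo_def by blast

lemma wf_A: "wf_struc n A"
  using C_clq_A unfolding C_clq_def C_clq0_def by blast

lemma sparse_A: "sparse_cliques n A"
  using C_clq_A unfolding C_clq_def C_clq0_def sparse_cliques_def by blast

lemma geometric_Bh: "geometric n Bh"
  using C_geo_Bh unfolding C_geo_def by blast

lemma sparse_Bh: "sparse_cliques n Bh"
  using geometric_sparse_cliques[OF geometric_Bh finite_U n_ge_1] .

lemma substruc_Ggeo_A: "substruc (Ggeo n A) Bh"
  using strong_Ggeo_A unfolding strong_def by blast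

lemma UA_subset_U: "UA \<subseteq> U"
  using substruc_Ggeo_A unfolding substruc_def by simp

lemma delta_Bh_UA_le: "finite X \<Longrightarrow> UA \<subseteq> X \<Longrightarrow> X \<subseteq> U \<Longrightarrow> delta n (restr Bh UA) \<le> delta n (restr Bh X)"
  using strong_Ggeo_A unfolding strong_def by force

lemma maxcliques_BhD:
  assumes "K \<in> MB"
  shows "finite K" "n \<le> card K" "K \<subseteq> U"
  using cliqueD[OF maxcliques_clique[OF assms] finite_U] by blast+

lemma maxcliques_AD:
  assumes "F \<in> MA"
  shows "finite F" "n \<le> card F" "F \<subseteq> UA"
  using cliqueD[OF maxcliques_clique[OF assms] finite_UA] by blast+

lemma maxclique_A_subset_maxclique_Bh:
  assumes "F \<in> MA"
  obtains K where "K \<in> MB" "F \<subseteq> K"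
proof -
  have "clique n (Ggeo n A) F" using maxclique_clique_Ggeo[OF sparse_A pure_A n_ge_1 assms] .
  then have "clique n Bh F" using clique_substruc_iff[OF substruc_Ggeo_A] by blast
  then show ?thesis using clique_subset_maxclique[OF finite_U] that by blast
qed

lemma delta_Bh_le_delta_A:
  assumes XA: "X \<subseteq> UA"
  shows "delta n (restr Bh X) \<le> delta n (restr A X)"
proof -
  \<comment> \<open>Group the maximal cliques of A by a maximal clique of Bh containing them; purity bounds
      each group by the contribution of that clique.\<close>
  have "\<forall>F\<in>MA. \<exists>K. K \<in> MB \<and> F \<subseteq> K" using maxclique_A_subset_maxclique_Bh by blast
  from bchoice[OF this] obtain phi where phi: "\<forall>F\<in>MA. phi F \<in> MB \<and> F \<subseteq> phi F" by blast
  let ?g = "\<lambda>F. int (card_star n (F \<inter> X))"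
  have fibre: "sum ?g {F \<in> MA. phi F = K} \<le> int (card_star n (K \<inter> X))" for K
  proof -
    have "sum ?g {F \<in> MA. phi F = K} = (\<Sum>F\<in>{F \<in> MA. phi F = K}. int (card_star n (F \<inter> (K \<inter> X))))"
    proof (rule sum.cong[OF refl])
      fix F assume "F \<in> {F \<in> MA. phi F = K}"
      then have "F \<inter> (K \<inter> X) = F \<inter> X" using phi by blast
      then show "?g F = int (card_star n (F \<inter> (K \<inter> X)))" by simp
    qed
    also have "\<dots> \<le> (\<Sum>F\<in>MA. int (card_star n (F \<inter> (K \<inter> X))))"
      by (rule sum_mono2[OF finite_maxcliques[OF finite_UA]]) auto
    also have "\<dots> \<le> int (card_star n (K \<inter> X))"
      using pure_sum_card_star_le[OF sparse_A pure_A n_ge_1, of "K \<inter> X"] XA by blast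
    finally show ?thesis .
  qed
  have "(\<Sum>K\<in>MB. sum ?g {F \<in> MA. phi F = K}) = sum ?g MA"
    by (rule sum.group[OF finite_maxcliques[OF finite_UA] finite_maxcliques[OF finite_U]]) (use phi in blast)
  then have "sum ?g MA = (\<Sum>K\<in>MB. sum ?g {F \<in> MA. phi F = K})" by simp
  also have "\<dots> \<le> (\<Sum>K\<in>MB. int (card_star n (K \<inter> X)))"
    by (rule sum_mono) (rule fibre)
  finally have "sum ?g MA \<le> (\<Sum>K\<in>MB. int (card_star n (K \<inter> X)))" .
  moreover have "X \<subseteq> U" using XA UA_subset_U by blast
  ultimately show ?thesis unfolding delta_restr_eq[OF sparse_A XA] delta_restr_eq[OF sparse_Bh \<open>X \<subseteq> U\<close>]
    by linarith
qed

definition outer_cliques :: "'a set set" where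
  "outer_cliques = {K \<in> MB. \<not> K \<subseteq> UA}"

definition anchor :: "'a set \<Rightarrow> 'a set" where
  "anchor K = (SOME C. C \<subseteq> K \<inter> UA \<and> card C = min (n - 1) (card (K \<inter> UA)))"

definition trim :: "'a set \<Rightarrow> 'a set" where
  "trim K = anchor K \<union> (K - UA)"

definition B :: "'a struc" where
  "B = (U, rel A \<union> {S. finite S \<and> card S = n \<and> (\<exists>K\<in>outer_cliques. S \<subseteq> trim K)})"

lemma univ_B [simp]: "univ B = U"
  by (simp add: B_def univ_def)

lemma rel_B: "rel B = rel A \<union> {S. finite S \<and> card S = n \<and> (\<exists>K\<in>outer_cliques. S \<subseteq> trim K)}"
  by (simp add: B_def rel_def)

lemma outer_cliques_maxclique: "K \<in> outer_cliques \<Longrightarrow> K \<in> MB"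
  by (simp add: outer_cliques_def)

lemma anchor_props: "anchor K \<subseteq> K \<inter> UA \<and> card (anchor K) = min (n - 1) (card (K \<inter> UA))"
proof -
  have "min (n - 1) (card (K \<inter> UA)) \<le> card (K \<inter> UA)" by simp
  then obtain C where "C \<subseteq> K \<inter> UA" "card C = min (n - 1) (card (K \<inter> UA))"
    by (rule obtain_subset_with_card_n)
  then have "\<exists>C. C \<subseteq> K \<inter> UA \<and> card C = min (n - 1) (card (K \<inter> UA))" by blast
  then show ?thesis unfolding anchor_def by (rule someI_ex)
qed

lemma anchor_subset: "anchor K \<subseteq> K \<inter> UA"
  using anchor_props by blast

lemma finite_anchor: "finite (anchor K)"
  using anchor_subset finite_UA finite_subset by blast

lemma card_anchor_le: "card (anchor K) \<le> n - 1"
  using anchor_props by simp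

lemma anchor_eq_if_small:
  assumes "card (K \<inter> UA) < n - 1"
  shows "anchor K = K \<inter> UA"
proof -
  have "card (anchor K) = card (K \<inter> UA)" using anchor_props assms by simp
  moreover have "finite (K \<inter> UA)" using finite_UA by simp
  ultimately show ?thesis using card_subset_eq anchor_subset by metis
qed

lemma trim_subset: "trim K \<subseteq> K"
  using anchor_subset unfolding trim_def by blast

lemma trim_Int_UA: "trim K \<inter> UA = anchor K"
  using anchor_subset unfolding trim_def by blast

lemma card_trim_ge:
  assumes "K \<in> outer_cliques"
  shows "n \<le> card (trim K)"
proof -
  have K: "K \<in> MB" using assms by (rule outer_cliques_maxclique)
  have fK: "finite K" using maxcliques_BhD(1)[OF K] .
  have cMK: "card (trim K) = card (anchor K) + card (K - UA)"
    unfolding trim_def by (rule card_Un_disjoint) (use finite_anchor fK anchor_subset in auto)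
  show ?thesis
  proof (cases "card (K \<inter> UA) < n - 1")
    case True
    then have "trim K = K" using anchor_eq_if_small unfolding trim_def by blast
    then show ?thesis using maxcliques_BhD(2)[OF K] by simp
  next
    case False
    then have "card (anchor K) = n - 1" using anchor_props by simp
    moreover have "K - UA \<noteq> {}" using assms unfolding outer_cliques_def by blast
    then have "card (K - UA) \<ge> 1" using fK by (simp add: Suc_le_eq card_gt_0_iff)
    ultimately show ?thesis using cMK n_ge_2 by linarith
  qed
qed

lemma card_trim_Int_lt:
  assumes "K \<in> outer_cliques" "K' \<in> outer_cliques" "K \<noteq> K'"
  shows "card (trim K \<inter> trim K') < n - 1"
proof -
  have K: "K \<in> MB" "K' \<in> MB" using assms outer_cliques_maxclique by blast+
  have "card (trim K \<inter> trim K') \<le> card (K \<inter> K')"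
    using trim_subset maxcliques_BhD(1)[OF K(1)] by (intro card_mono) auto
  then show ?thesis
    using geometric_maxcliques_Int_lt[OF geometric_Bh sparse_Bh n_ge_2 K assms(3)] by linarith
qed

lemma inj_on_trim: "inj_on trim outer_cliques"
proof (rule inj_onI)
  fix K K' assume K: "K \<in> outer_cliques" "K' \<in> outer_cliques" "trim K = trim K'"
  show "K = K'"
  proof (rule ccontr)
    assume "K \<noteq> K'"
    then show False using card_trim_Int_lt[OF K(1,2)] card_trim_ge[OF K(1)] K(3) by simp
  qed
qed

lemma rel_B_restr:
  assumes "Y \<subseteq> UA"
  shows "{S \<in> rel B. S \<subseteq> Y} = {S \<in> rel A. S \<subseteq> Y}"
proof -
  have "S \<in> rel A" if S: "S \<in> rel B" "S \<subseteq> Y" for S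
  proof (rule ccontr)
    assume "S \<notin> rel A"
    then obtain K where K: "K \<in> outer_cliques" "S \<subseteq> trim K" and "card S = n"
      using S(1) unfolding rel_B by blast
    have "S \<subseteq> anchor K" using K(2) S(2) assms trim_Int_UA by blast
    then have "card S \<le> n - 1" using card_mono[OF finite_anchor] card_anchor_le le_trans by blast
    then show False using \<open>card S = n\<close> n_ge_2 by simp
  qed
  then show ?thesis unfolding rel_B by blast
qed

lemma restr_B: "Y \<subseteq> UA \<Longrightarrow> restr B Y = restr A Y"
  using rel_B_restr unfolding restr_def by (simp add: rel_def[symmetric])

lemma rel_B_outside:
  assumes "S \<in> rel B" "\<not> S \<subseteq> UA"
  obtains K where "K \<in> outer_cliques" "S \<subseteq> trim K"
proof -
  have "S \<notin> rel A" using assms(2) wf_A unfolding wf_struc_def by blast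
  then show ?thesis using assms(1) that unfolding rel_B by blast
qed

lemma wf_B: "wf_struc n B"
  unfolding wf_struc_def
proof
  fix S assume S: "S \<in> rel B"
  show "S \<subseteq> univ B \<and> finite S \<and> card S = n"
  proof (cases "S \<in> rel A")
    case True
    then show ?thesis using wf_A UA_subset_U unfolding wf_struc_def by auto
  next
    case False
    then obtain K where K: "K \<in> outer_cliques" "S \<subseteq> trim K" and "finite S" "card S = n"
      using S unfolding rel_B by blast
    moreover have "trim K \<subseteq> U"
      using trim_subset maxcliques_BhD(3)[OF outer_cliques_maxclique[OF K(1)]] by blast
    ultimately show ?thesis by auto
  qed
qed

lemma clique_B_outside:
  assumes cQ: "clique n B Q" and "\<not> Q \<subseteq> UA"
  obtains K where "K \<in> outer_cliques" "Q \<subseteq> trim K"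
proof -
  obtain e where e: "e \<in> Q" "e \<notin> UA" using assms(2) by blast
  have fQ: "finite Q" "n \<le> card Q" using cliqueD[OF cQ] finite_U by auto
  have rQ: "S \<in> rel B" if "S \<subseteq> Q" "finite S" "card S = n" for S
    using clique_subset_in_rel[OF cQ that] .
  have "n - 1 \<le> card (Q - {e})" using fQ e by simp
  then obtain T where T: "T \<subseteq> Q - {e}" "card T = n - 1" "finite T" by (rule obtain_subset_with_card_n)
  have "e \<notin> T" using T by blast
  then have "card (insert e T) = n" using T n_ge_2 by simp
  then have "insert e T \<in> rel B" by (intro rQ) (use T e in auto)
  then obtain K where K: "K \<in> outer_cliques" "insert e T \<subseteq> trim K"
    using rel_B_outside e by blast
  \<comment> \<open>Exchanging a point of T for q gives an n-set in some trim K' sharing n - 1 points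
      with trim K, which forces K' = K.\<close>
  have "q \<in> trim K" if q: "q \<in> Q" "q \<notin> insert e T" for q
  proof -
    obtain s where s: "s \<in> T" using T n_ge_2 by fastforce
    let ?R = "insert e (T - {s})"
    have "e \<notin> T - {s}" using \<open>e \<notin> T\<close> by blast
    then have cR: "card ?R = n - 1" using T s n_ge_2 by simp
    have "card (insert q ?R) = n" using cR q(2) T n_ge_2 by simp
    then have "insert q ?R \<in> rel B" by (intro rQ) (use T e q(1) in auto)
    then obtain K' where K': "K' \<in> outer_cliques" "insert q ?R \<subseteq> trim K'"
      using rel_B_outside e by blast
    have "?R \<subseteq> trim K' \<inter> trim K" using K K' s by blast
    moreover have "finite (trim K' \<inter> trim K)"
      using trim_subset maxcliques_BhD(1)[OF outer_cliques_maxclique[OF K(1)]] finite_subset by blast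
    ultimately have "n - 1 \<le> card (trim K' \<inter> trim K)" using card_mono cR by metis
    then have "K' = K" using card_trim_Int_lt[OF K'(1) K(1)] by fastforce
    then show ?thesis using K' by blast
  qed
  then have "Q \<subseteq> trim K" using K by blast
  then show ?thesis using K(1) that by blast
qed

lemma clique_B_cover:
  assumes cQ: "clique n B Q"
  shows "\<exists>F\<in>MA \<union> trim ` outer_cliques. Q \<subseteq> F"
proof (cases "Q \<subseteq> UA")
  case True
  have "S \<in> rel A" if "S \<subseteq> Q" "finite S" "card S = n" for S
    using clique_subset_in_rel[OF cQ that] that(1) True rel_B_restr[OF subset_refl] by blast
  then have "clique n A Q" using cQ True unfolding clique_def by auto
  then obtain F where "F \<in> MA" "Q \<subseteq> F" using clique_subset_maxclique[OF finite_UA] by blast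
  then show ?thesis by blast
next
  case False
  then obtain K where "K \<in> outer_cliques" "Q \<subseteq> trim K" using clique_B_outside[OF cQ] by blast
  then show ?thesis by blast
qed

lemma card_maxclique_A_Int_trim_lt:
  assumes "F \<in> MA"
  shows "card (F \<inter> trim K) < n"
proof -
  have "F \<inter> trim K \<subseteq> anchor K" using maxcliques_AD(3)[OF assms] trim_Int_UA by blast
  then have "card (F \<inter> trim K) \<le> n - 1"
    using card_mono[OF finite_anchor] card_anchor_le le_trans by blast
  then show ?thesis using n_ge_2 by linarith
qed

lemma B_family_Int_lt:
  assumes F: "F \<in> MA \<union> trim ` outer_cliques" and F': "F' \<in> MA \<union> trim ` outer_cliques"
    and "F \<noteq> F'"
  shows "card (F \<inter> F') < n"
proof (cases "F \<in> MA")
  case FA: True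
  show ?thesis
  proof (cases "F' \<in> MA")
    case True
    then show ?thesis using FA assms(3) C_clq_A unfolding C_clq_def C_clq0_def by blast
  next
    case False
    then show ?thesis using F' card_maxclique_A_Int_trim_lt[OF FA] by blast
  qed
next
  case False
  then obtain K where K: "K \<in> outer_cliques" "F = trim K" using F by blast
  show ?thesis
  proof (cases "F' \<in> MA")
    case True
    then show ?thesis using card_maxclique_A_Int_trim_lt[OF True, of K] K(2) by (simp add: Int_commute)
  next
    case False
    then obtain K' where K': "K' \<in> outer_cliques" "F' = trim K'" using F' by blast
    then have "K \<noteq> K'" using K assms(3) by blast
    then show ?thesis using card_trim_Int_lt[OF K(1) K'(1)] K(2) K'(2) by simp
  qed
qed

lemma clique_B_trim:
  assumes K: "K \<in> outer_cliques"
  shows "clique n B (trim K)"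
proof -
  have "trim K \<subseteq> U"
    using trim_subset maxcliques_BhD(3)[OF outer_cliques_maxclique[OF K]] by blast
  moreover obtain S0 where "S0 \<subseteq> trim K" "card S0 = n" "finite S0"
    using obtain_subset_with_card_n[OF card_trim_ge[OF K]] by blast
  moreover have "S \<in> rel B" if "S \<subseteq> trim K" "finite S" "card S = n" for S
    using K that unfolding rel_B by blast
  ultimately show ?thesis unfolding clique_def by auto
qed

lemma clique_B_maxclique_A:
  assumes F: "F \<in> MA"
  shows "clique n B F"
proof -
  have "F \<subseteq> U" using maxcliques_AD(3)[OF F] UA_subset_U by blast
  moreover have "S \<in> rel B" if "S \<subseteq> F" "finite S" "card S = n" for S
    using clique_subset_in_rel[OF maxcliques_clique[OF F] that] unfolding rel_B by blast
  moreover obtain S0 where "S0 \<subseteq> F" "finite S0" "card S0 = n"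
    using maxcliques_clique[OF F] unfolding clique_def by blast
  ultimately show ?thesis unfolding clique_def by auto
qed

lemma maxcliques_B: "maxcliques n B = MA \<union> trim ` outer_cliques"
  using finite_U clique_B_maxclique_A clique_B_trim clique_B_cover B_family_Int_lt
  by (intro maxcliques_eqI) auto

lemma sparse_B: "sparse_cliques n B"
  unfolding sparse_cliques_def maxcliques_B using finite_U B_family_Int_lt by simp

lemma delta_B_eq:
  assumes "Y \<subseteq> U"
  shows "delta n (restr B Y) = int (card Y) - (\<Sum>F\<in>MA. int (card_star n (F \<inter> Y)))
          - (\<Sum>K\<in>outer_cliques. int (card_star n (trim K \<inter> Y)))"
proof -
  have "trim K \<notin> MA" if "K \<in> outer_cliques" for K
    using that maxcliques_AD(3) unfolding outer_cliques_def trim_def by blast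
  then have disj: "MA \<inter> trim ` outer_cliques = {}" by blast
  have fin: "finite MA" "finite outer_cliques"
    using finite_maxcliques[OF finite_UA] finite_maxcliques[OF finite_U]
    unfolding outer_cliques_def by auto
  have "(\<Sum>F\<in>MA \<union> trim ` outer_cliques. int (card_star n (F \<inter> Y))) =
        (\<Sum>F\<in>MA. int (card_star n (F \<inter> Y))) + (\<Sum>F\<in>trim ` outer_cliques. int (card_star n (F \<inter> Y)))"
    using fin disj by (simp add: sum.union_disjoint)
  moreover have "(\<Sum>F\<in>trim ` outer_cliques. int (card_star n (F \<inter> Y)))
      = (\<Sum>K\<in>outer_cliques. int (card_star n (trim K \<inter> Y)))"
    using sum.reindex[OF inj_on_trim] by simp
  ultimately show ?thesis
    using delta_restr_eq[OF sparse_B, of Y] assms unfolding maxcliques_B by simp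
qed

lemma card_star_trim_le:
  assumes "K \<in> MB"
  shows "int (card_star n (trim K \<inter> Y))
           \<le> int (card_star n (K \<inter> Y)) - int (card_star n (K \<inter> (Y \<inter> UA)))"
proof -
  have fK: "finite K" using maxcliques_BhD(1)[OF assms] .
  have trim_split: "card (trim K \<inter> Y) = card (anchor K \<inter> Y) + card ((K - UA) \<inter> Y)"
  proof -
    have "trim K \<inter> Y = (anchor K \<inter> Y) \<union> ((K - UA) \<inter> Y)" unfolding trim_def by blast
    moreover have "(anchor K \<inter> Y) \<inter> ((K - UA) \<inter> Y) = {}" using anchor_subset by blast
    ultimately show ?thesis using finite_anchor fK by (simp add: card_Un_disjoint)
  qed
  have K_split: "card (K \<inter> Y) = card (K \<inter> (Y \<inter> UA)) + card ((K - UA) \<inter> Y)"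
  proof -
    have "K \<inter> Y = (K \<inter> (Y \<inter> UA)) \<union> ((K - UA) \<inter> Y)" by blast
    moreover have "(K \<inter> (Y \<inter> UA)) \<inter> ((K - UA) \<inter> Y) = {}" by blast
    ultimately show ?thesis using fK card_Un_disjoint[of "K \<inter> (Y \<inter> UA)" "(K - UA) \<inter> Y"] by simp
  qed
  have "card (anchor K \<inter> Y) \<le> card (K \<inter> (Y \<inter> UA))"
    using anchor_subset fK by (intro card_mono) auto
  moreover have "card (anchor K \<inter> Y) \<le> n - 1"
    using card_mono[OF finite_anchor Int_lower1, of K Y] card_anchor_le[of K] by linarith
  moreover have "int ((c + e) - m) \<le> int ((a + e) - m) - int (a - m)"
    if "c \<le> a" "c \<le> m" for a c e m :: nat
    using that by arith
  ultimately show ?thesis unfolding card_star_def trim_split K_split by blast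
qed

lemma delta_B_gain_eq:
  assumes YU: "Y \<subseteq> U"
  shows "delta n (restr B Y) - delta n (restr B (Y \<inter> UA))
           = int (card Y) - int (card (Y \<inter> UA)) - (\<Sum>K\<in>outer_cliques. int (card_star n (trim K \<inter> Y)))"
proof -
  let ?YA = "Y \<inter> UA"
  have outer_zero: "(\<Sum>K\<in>outer_cliques. int (card_star n (trim K \<inter> ?YA))) = 0"
  proof (rule sum.neutral, rule ballI)
    fix K
    have "card (trim K \<inter> ?YA) \<le> card (anchor K)"
      using trim_Int_UA by (intro card_mono[OF finite_anchor]) blast
    then have "card (trim K \<inter> ?YA) < n" using card_anchor_le[of K] n_ge_2 by linarith
    then show "int (card_star n (trim K \<inter> ?YA)) = 0" by (simp add: card_star_eq_0)
  qed
  have "(\<Sum>F\<in>MA. int (card_star n (F \<inter> ?YA))) = (\<Sum>F\<in>MA. int (card_star n (F \<inter> Y)))"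
  proof (rule sum.cong[OF refl])
    fix F assume "F \<in> MA"
    then have "F \<inter> ?YA = F \<inter> Y" using maxcliques_AD(3) by blast
    then show "int (card_star n (F \<inter> ?YA)) = int (card_star n (F \<inter> Y))" by simp
  qed
  moreover have "?YA \<subseteq> U" using YU by blast
  ultimately show ?thesis unfolding delta_B_eq[OF YU] delta_B_eq[OF \<open>?YA \<subseteq> U\<close>] outer_zero by simp
qed

lemma delta_Bh_gain_eq:
  assumes YU: "Y \<subseteq> U"
  shows "delta n (restr Bh Y) - delta n (restr Bh (Y \<inter> UA)) = int (card Y) - int (card (Y \<inter> UA))
           - (\<Sum>K\<in>outer_cliques. int (card_star n (K \<inter> Y)) - int (card_star n (K \<inter> (Y \<inter> UA))))"
proof -
  let ?YA = "Y \<inter> UA"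
  have "(\<Sum>K\<in>MB. int (card_star n (K \<inter> Y)) - int (card_star n (K \<inter> ?YA)))
      = (\<Sum>K\<in>outer_cliques. int (card_star n (K \<inter> Y)) - int (card_star n (K \<inter> ?YA)))"
  proof (rule sum.mono_neutral_right[OF finite_maxcliques[OF finite_U]])
    show "outer_cliques \<subseteq> MB" unfolding outer_cliques_def by blast
    show "\<forall>K\<in>MB - outer_cliques. int (card_star n (K \<inter> Y)) - int (card_star n (K \<inter> ?YA)) = 0"
    proof
      fix K assume "K \<in> MB - outer_cliques"
      then have "K \<inter> ?YA = K \<inter> Y" unfolding outer_cliques_def by blast
      then show "int (card_star n (K \<inter> Y)) - int (card_star n (K \<inter> ?YA)) = 0" by simp
    qed
  qed
  moreover have "(\<Sum>K\<in>MB. int (card_star n (K \<inter> Y)) - int (card_star n (K \<inter> ?YA)))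
      = (\<Sum>K\<in>MB. int (card_star n (K \<inter> Y))) - (\<Sum>K\<in>MB. int (card_star n (K \<inter> ?YA)))"
    by (rule sum_subtractf)
  moreover have "?YA \<subseteq> U" using YU by blast
  ultimately show ?thesis
    unfolding delta_restr_eq[OF sparse_Bh YU] delta_restr_eq[OF sparse_Bh \<open>?YA \<subseteq> U\<close>] by linarith
qed

lemma delta_B_gain_ge:
  assumes "Y \<subseteq> U"
  shows "delta n (restr Bh Y) - delta n (restr Bh (Y \<inter> UA))
           \<le> delta n (restr B Y) - delta n (restr B (Y \<inter> UA))"
proof -
  have "(\<Sum>K\<in>outer_cliques. int (card_star n (trim K \<inter> Y))) \<le>
      (\<Sum>K\<in>outer_cliques. int (card_star n (K \<inter> Y)) - int (card_star n (K \<inter> (Y \<inter> UA))))"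
    by (rule sum_mono, rule card_star_trim_le, rule outer_cliques_maxclique)
  then show ?thesis unfolding delta_B_gain_eq[OF assms] delta_Bh_gain_eq[OF assms] by linarith
qed

lemma delta_Bh_le_delta_B:
  assumes "Y \<subseteq> U"
  shows "delta n (restr Bh Y) \<le> delta n (restr B Y)"
  using delta_B_gain_ge[OF assms] delta_Bh_le_delta_A[of "Y \<inter> UA"] restr_B[of "Y \<inter> UA"] by simp

lemma delta_B_ge:
  assumes "Y \<subseteq> U" "n - 1 \<le> card Y"
  shows "int n - 1 \<le> delta n (restr B Y)"
  using geometric_delta_restr_ge[OF geometric_Bh sparse_Bh n_ge_1 assms] delta_Bh_le_delta_B[OF assms(1)]
  by linarith

lemma gdim_B_base:
  assumes "C \<subseteq> U" "card C = n - 1"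
  shows "gdim n B C = int n - 1"
proof (rule antisym)
  have "card C < n" using assms(2) n_ge_2 by simp
  then have "delta n (restr B C) = int (card C)" using delta_restr_small[OF sparse_B] assms(1) by simp
  then show "gdim n B C \<le> int n - 1"
    using gdim_le_delta[of B C C n] finite_U assms n_ge_2 by (simp add: of_nat_diff)
  have fin: "finite (univ B)" and CB: "C \<subseteq> univ B" using finite_U assms(1) by auto
  obtain Y where Y: "C \<subseteq> Y" "Y \<subseteq> univ B" "gdim n B C = delta n (restr B Y)"
    using gdim_attained[OF fin CB] .
  have "finite Y" using Y(2) fin finite_subset by blast
  then have "card C \<le> card Y" using Y(1) by (rule card_mono)
  then show "int n - 1 \<le> gdim n B C" using delta_B_ge[of Y] Y(2,3) assms(2) by simp
qed

lemma gdim_B_le_gdim_A: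
  assumes "X \<subseteq> UA"
  shows "gdim n B X \<le> gdim n A X"
proof -
  obtain Y where Y: "X \<subseteq> Y" "Y \<subseteq> UA" "gdim n A X = delta n (restr A Y)"
    using gdim_attained[OF finite_UA assms] .
  have "finite (univ B)" "Y \<subseteq> univ B" using finite_U Y(2) UA_subset_U by auto
  then have "gdim n B X \<le> delta n (restr B Y)" using gdim_le_delta Y(1) by blast
  also have "\<dots> = gdim n A X" unfolding Y(3) restr_B[OF Y(2)] ..
  finally show ?thesis .
qed

lemma gdim_A_Int_maxclique_Bh_le:
  assumes K: "K \<in> MB" and "n \<le> card (K \<inter> UA)"
  shows "gdim n A (K \<inter> UA) \<le> int n - 1"
proof -
  obtain S0 where S0: "S0 \<subseteq> K \<inter> UA" "finite S0" "card S0 = n"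
    using obtain_subset_with_card_n[OF assms(2)] by blast
  have "clique n Bh (K \<inter> UA)" using clique_of_subset[OF maxcliques_clique[OF K] Int_lower1 S0] .
  then have "clique n (Ggeo n A) (K \<inter> UA)"
    unfolding clique_substruc_iff[OF substruc_Ggeo_A] by simp
  then show ?thesis by (rule gdim_clique_Ggeo_le[OF sparse_A pure_A n_ge_1])
qed

lemma gdim_B_Int_UA_le:
  assumes K: "K \<in> MB"
  shows "gdim n B (K \<inter> UA) \<le> int n - 1"
proof (cases "n \<le> card (K \<inter> UA)")
  case True
  have "gdim n B (K \<inter> UA) \<le> gdim n A (K \<inter> UA)" by (rule gdim_B_le_gdim_A) blast
  then show ?thesis using gdim_A_Int_maxclique_Bh_le[OF K True] by linarith
next
  case False
  have fin: "finite (univ B)" and sub: "K \<inter> UA \<subseteq> univ B" using finite_U UA_subset_U by auto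
  have "gdim n B (K \<inter> UA) \<le> delta n (restr B (K \<inter> UA))" using gdim_le_delta[OF fin subset_refl sub] .
  also have "\<dots> \<le> int (card (K \<inter> UA))" using delta_restr_le_card[OF sparse_B sub] .
  finally show ?thesis using False by linarith
qed

lemma gdim_B_trim_le:
  assumes K: "K \<in> outer_cliques"
  shows "gdim n B (trim K) \<le> int n - 1"
proof -
  have fin: "finite (univ B)" using finite_U by simp
  have sub: "trim K \<subseteq> univ B" using trim_subset maxcliques_BhD(3)[OF outer_cliques_maxclique[OF K]] by auto
  have "trim K \<in> maxcliques n B" unfolding maxcliques_B using K by blast
  then have "delta n (restr B (trim K)) = int n - 1"
    using delta_restr_in_maxclique[OF sparse_B _ subset_refl] card_trim_ge[OF K] n_ge_2 by simp
  then show ?thesis using gdim_le_delta[OF fin subset_refl sub, of n] by simp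
qed

lemma gdim_B_maxclique_Bh_le:
  assumes K: "K \<in> MB"
  shows "gdim n B K \<le> int n - 1"
proof (cases "K \<in> outer_cliques")
  case False
  then have "K \<inter> UA = K" using K unfolding outer_cliques_def by blast
  then show ?thesis using gdim_B_Int_UA_le[OF K] by simp
next
  case outer: True
  let ?KA = "K \<inter> UA"
  have KU: "K \<subseteq> univ B" using maxcliques_BhD(3)[OF K] by simp
  \<comment> \<open>Submodularity over K = (K \<inter> A) \<union> trim K, whose parts meet in the anchor.\<close>
  have "gdim n B (?KA \<union> trim K) + gdim n B (?KA \<inter> trim K) \<le> gdim n B ?KA + gdim n B (trim K)"
    by (rule gdim_submod[OF sparse_B]) (use KU trim_subset in blast)+
  moreover have "?KA \<union> trim K = K" "?KA \<inter> trim K = anchor K"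
    using anchor_subset unfolding trim_def by blast+
  ultimately have sm: "gdim n B K + gdim n B (anchor K) \<le> gdim n B ?KA + gdim n B (trim K)"
    by simp
  show ?thesis
  proof (cases "card ?KA < n - 1")
    case True
    then have "anchor K = ?KA" by (rule anchor_eq_if_small)
    then show ?thesis using sm gdim_B_trim_le[OF outer] by simp
  next
    case False
    then have "card (anchor K) = n - 1" using anchor_props by simp
    moreover have "anchor K \<subseteq> U" using anchor_subset KU by auto
    ultimately have "gdim n B (anchor K) = int n - 1" using gdim_B_base by blast
    then show ?thesis using sm gdim_B_trim_le[OF outer] gdim_B_Int_UA_le[OF K] by simp
  qed
qed

lemma C_clq_B: "C_clq n B"
  unfolding C_clq_def C_clq0_def
proof (intro conjI ballI impI)
  show "wf_struc n B" by (rule wf_B)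
  show "finite (univ B)" using finite_U by simp
  show "card (K1 \<inter> K2) < n" if "K1 \<in> maxcliques n B" "K2 \<in> maxcliques n B" "K1 \<noteq> K2" for K1 K2
    using sparse_B that unfolding sparse_cliques_def by blast
  fix a assume a: "a \<in> univ B"
  have "delta n (restr B {a}) = 1" using delta_restr_small[OF sparse_B, of "{a}"] a n_ge_2 by simp
  moreover have "0 < delta n (restr B X)" if X: "finite X" "a \<in> X" "X \<subseteq> U" for X
  proof (cases "n - 1 \<le> card X")
    case True
    then show ?thesis using delta_B_ge[OF X(3) True] n_ge_2 by linarith
  next
    case False
    then have "delta n (restr B X) = int (card X)" using delta_restr_small[OF sparse_B] X(3) by simp
    moreover have "card X \<noteq> 0" using X(1,2) by auto
    ultimately show ?thesis by simp
  qed
  moreover have "substruc (restr B {a}) B" unfolding substruc_def using a by simp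
  ultimately show "strong n (restr B {a}) B" unfolding strong_def by simp
qed

lemma strong_A_B: "strong n A B"
proof -
  have "rel A = {S \<in> rel A. S \<subseteq> UA}" using wf_A unfolding wf_struc_def by blast
  also have "\<dots> = {S \<in> rel B. S \<subseteq> UA}" using rel_B_restr[OF subset_refl] by simp
  finally have "substruc A B" unfolding substruc_def using UA_subset_U by simp
  moreover have "delta n (restr B UA) \<le> delta n (restr B X)" if X: "finite X" "UA \<subseteq> X" "X \<subseteq> U" for X
  proof -
    have "X \<inter> UA = UA" using X(2) by blast
    then have "delta n (restr Bh X) - delta n (restr Bh UA) \<le> delta n (restr B X) - delta n (restr B UA)"
      using delta_B_gain_ge[OF X(3)] by simp
    then show ?thesis using delta_Bh_UA_le[OF X] by linarith
  qed
  ultimately show ?thesis unfolding strong_def using finite_UA by auto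
qed

lemma pure_B: "pure n B (n - 1)"
  unfolding pure_def
proof (intro conjI allI impI)
  fix X assume "X \<subseteq> univ B" "finite X \<and> card X = n - 1"
  then show "gindep n B X" unfolding gindep_def using gdim_B_base[of X] n_ge_2 by simp
next
  obtain X where X: "X \<subseteq> UA" "finite X" "card X = n - 1 + 1" "\<not> gindep n A X"
    using pure_A unfolding pure_def by blast
  have "gdim n A X \<le> delta n (restr A X)" using gdim_le_delta[OF finite_UA subset_refl X(1)] .
  moreover have "delta n (restr A X) \<le> int (card X)" using delta_restr_le_card[OF sparse_A X(1)] .
  moreover have "gdim n A X \<noteq> int (card X)" using X(2,4) unfolding gindep_def by simp
  ultimately have "\<not> gindep n B X" using gdim_B_le_gdim_A[OF X(1)] unfolding gindep_def by linarith
  then show "\<exists>X\<subseteq>univ B. finite X \<and> card X = n - 1 + 1 \<and> \<not> gindep n B X"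
    using X(1-3) UA_subset_U by auto
qed

lemma rel_Ggeo_B_subset: "rel (Ggeo n B) \<subseteq> rel Bh"
proof
  fix S assume "S \<in> rel (Ggeo n B)"
  then obtain C where S: "S \<subseteq> U" "finite S" "card S = n"
    and C: "C \<subseteq> U" "finite C" "card C = n - 1" "S \<subseteq> gcl n B C"
    unfolding rel_Ggeo by auto
  have "gdim n B (C \<union> S) = gdim n B C" using gdim_Un_gcl[OF sparse_B] C S by simp
  then have g: "gdim n B (C \<union> S) = int n - 1" using gdim_B_base[OF C(1,3)] by simp
  have fin: "finite (univ B)" and CSB: "C \<union> S \<subseteq> univ B" using finite_U C S by auto
  obtain Y where Y: "C \<union> S \<subseteq> Y" "Y \<subseteq> univ B" "gdim n B (C \<union> S) = delta n (restr B Y)"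
    using gdim_attained[OF fin CSB] .
  then have YU: "Y \<subseteq> U" by simp
  have "delta n (restr Bh Y) < int n" using delta_Bh_le_delta_B[OF YU] Y(3) g by simp
  moreover have fY: "finite Y" using YU finite_U finite_subset by blast
  moreover have "n \<le> card Y" using card_mono[OF fY, of S] Y(1) S(3) by simp
  ultimately obtain K where "K \<in> MB" "Y \<subseteq> K" using geometricE[OF geometric_Bh YU] by blast
  then show "S \<in> rel Bh" using clique_subset_in_rel[OF maxcliques_clique _ S(2,3)] Y(1) by blast
qed

lemma rel_Bh_subset_Ggeo_B: "rel Bh \<subseteq> rel (Ggeo n B)"
proof
  fix S assume SR: "S \<in> rel Bh"
  have wf_Bh: "wf_struc n Bh" using C_geo_Bh unfolding C_geo_def by blast
  then have S: "S \<subseteq> U" "finite S" "card S = n" using SR unfolding wf_struc_def by auto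
  obtain K where K: "K \<in> MB" "S \<subseteq> K"
    using clique_subset_maxclique[OF finite_U rel_clique[OF wf_Bh SR]] by blast
  obtain s where s: "s \<in> S" using S(3) n_ge_2 by fastforce
  let ?C = "S - {s}"
  have C: "?C \<subseteq> U" "finite ?C" "card ?C = n - 1" using S s by auto
  have "gdim n B K \<le> gdim n B ?C" using gdim_B_maxclique_Bh_le[OF K(1)] gdim_B_base[OF C(1,3)] by simp
  then have "K \<subseteq> gcl n B ?C"
    using gcl_if_gdim_le[of B ?C K] finite_U maxcliques_BhD(3)[OF K(1)] K(2) by auto
  moreover have "gcl n B ?C \<noteq> ?C" using calculation K(2) s by blast
  ultimately have "?C \<subseteq> U \<and> finite ?C \<and> card ?C = n - 1 \<and> gcl n B ?C \<noteq> ?C \<and> S \<subseteq> gcl n B ?C"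
    using C K(2) by auto
  then show "S \<in> rel (Ggeo n B)" unfolding rel_Ggeo univ_B using S by blast
qed

lemma Ggeo_B: "Ggeo n B = Bh"
proof -
  have "rel (Ggeo n B) = rel Bh" using rel_Ggeo_B_subset rel_Bh_subset_Ggeo_B by blast
  moreover have "univ (Ggeo n B) = univ Bh" by simp
  ultimately show ?thesis unfolding univ_def rel_def by (metis prod.collapse)
qed

end

theorem mainTheorem4:
  fixes n :: nat and A Bh :: "'a struc"
  assumes "n \<ge> 2"
    and "C_clq n A"
    and "pure n A (n - 1)"
    and "C_geo n Bh"
    and "strong n (Ggeo n A) Bh"
  shows "\<exists>B. C_clq n B \<and> strong n A B \<and> pure n B (n - 1) \<and> Ggeo n B = Bh"
proof -
  interpret geo_extension n A Bh using assms by unfold_locales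
  show ?thesis using C_clq_B strong_A_B pure_B Ggeo_B by blast
qed

end
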